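(* Suppose $\mathbf{v}_1(0),\dots,\mathbf{v}_m(0)$ are initialized i.i.d. from $N(0,\alpha^2\mathbf{I}_d)$. Then with probability at least $1-\delta$, $$\max_{k\in[m]}\frac{1}{\|\mathbf{v}_k(0)\|_2}\le\frac{(m/\delta)^{1/d}}{\alpha}.$$ Moreover, with probability at least $1-\delta$, for all $t\ge0$ of weight-normalized training, $\max_{k\in[m]}\frac{1}{\|\mathbf{v}_k(t)\|_2}\le\frac{(m/\delta)^{1/d}}{\alpha}$.
   Context: Weight-normalized network $f(\mathbf{x})=\frac{1}{\sqrt m}\sum_kc_k\sigma(g_k\mathbf{v}_k^\top\mathbf{x}/\|\mathbf{v}_k\|_2)$ with input dimension $d$, $\sigma(s)=\max\{s,0\}$, trained by gradient descent (or gradient flow) on the square loss in $\mathbf{v}_k,g_k$; $\mathbf{v}_k(t)$ is the parameter at iteration/time $t$. Since $\partial L/\partial\mathbf{v}_k$ is orthogonal to $\mathbf{v}_k$, along such training $\|\mathbf{v}_k(t)\|_2\ge\|\mathbf{v}_k(0)\|_2$. *)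

theory Defs
  imports "HOL-Probability.Probability"
begin

definition vnorm :: "nat \<Rightarrow> (nat \<Rightarrow> real) \<Rightarrow> real" where
  "vnorm d v = sqrt (\<Sum>i<d. (v i)\<^sup>2)"

text \<open>The Gaussian N(0, alpha^2 I_d) on R^d: product of d independent
  one-dimensional normals with mean 0 and standard deviation alpha.\<close>
definition gauss_vec :: "nat \<Rightarrow> real \<Rightarrow> (nat \<Rightarrow> real) measure" where
  "gauss_vec d \<alpha> = PiM {..<d} (\<lambda>_. density lborel (normal_density 0 \<alpha>))"

text \<open>Joint law of m i.i.d. initial vectors v_1(0),...,v_m(0) (indexed 0..m-1).\<close>
definition init_law :: "nat \<Rightarrow> nat \<Rightarrow> real \<Rightarrow> (nat \<Rightarrow> nat \<Rightarrow> real) measure" where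
  "init_law m d \<alpha> = PiM {..<m} (\<lambda>_. gauss_vec d \<alpha>)"

end

(* The density of N(0, \<sigma>^2) is at most 1 / (sqrt (2 pi) \<sigma>) \<le> 1 / (2 \<sigma>), so a Gaussian vector
   lies in the cube (-r, r)^d, which contains the open ball of radius r, with probability at
   most (r / \<sigma>)^d.  A union bound over the m neurons with r = \<sigma> (\<delta> / m)^(1/d) shows that all
   initial norms are at least r with probability at least 1 - \<delta>; since training never
   decreases the norms, the bound 1 / r then holds along the whole trajectory. *)
theory Submission
  imports Defs
begin

lemma normal_density_le:
  assumes "\<sigma> > 0"
  shows "normal_density \<mu> \<sigma> x \<le> 1 / (sqrt (2 * pi) * \<sigma>)"
  using assms unfolding normal_density_def
  by (auto intro!: mult_left_le simp: real_sqrt_mult divide_simps)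

lemma emeasure_normal_interval_le:
  assumes "\<sigma> > 0" "r \<ge> 0"
  shows "emeasure (density lborel (normal_density \<mu> \<sigma>)) {\<mu> - r<..<\<mu> + r} \<le> ennreal (r / \<sigma>)"
proof -
  let ?c = "1 / (sqrt (2 * pi) * \<sigma>)"
  have "emeasure (density lborel (normal_density \<mu> \<sigma>)) {\<mu> - r<..<\<mu> + r}
      = (\<integral>\<^sup>+ x. ennreal (normal_density \<mu> \<sigma> x) * indicator {\<mu> - r<..<\<mu> + r} x \<partial>lborel)"
    by (simp add: emeasure_density)
  also have "\<dots> \<le> (\<integral>\<^sup>+ x. ennreal ?c * indicator {\<mu> - r<..<\<mu> + r} x \<partial>lborel)"
    using normal_density_le[OF assms(1)]
    by (intro nn_integral_mono) (auto intro: ennreal_leI split: split_indicator)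
  also have "\<dots> = ennreal ?c * ennreal (2 * r)"
    using assms by (simp add: nn_integral_cmult)
  also have "\<dots> = ennreal (?c * (2 * r))"
    using assms by (simp add: ennreal_mult'[symmetric])
  also have "\<dots> \<le> ennreal (r / \<sigma>)"
  proof (intro ennreal_leI)
    have "2 \<le> sqrt (2 * pi)"
      using pi_gt3 by (simp add: real_le_rsqrt)
    then show "?c * (2 * r) \<le> r / \<sigma>"
      using assms by (simp add: divide_simps mult_left_mono mult.commute)
  qed
  finally show ?thesis .
qed

lemma prob_space_gauss_vec: "\<sigma> > 0 \<Longrightarrow> prob_space (gauss_vec d \<sigma>)"
  unfolding gauss_vec_def by (intro prob_space_PiM prob_space_normal_density)

lemma sets_gauss_vec_cube: "PiE {..<d} (\<lambda>_. {-r<..<r}) \<in> sets (gauss_vec d \<sigma>)"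
  unfolding gauss_vec_def by (intro sets_PiM_I_finite) auto

lemma measure_gauss_vec_cube_le:
  assumes "\<sigma> > 0" "r \<ge> 0"
  shows "measure (gauss_vec d \<sigma>) (PiE {..<d} (\<lambda>_. {-r<..<r})) \<le> (r / \<sigma>) ^ d"
proof -
  let ?N = "density lborel (normal_density 0 \<sigma>)"
  interpret N: prob_space ?N
    using prob_space_normal_density[OF assms(1)] .
  interpret finite_product_prob_space "\<lambda>_. ?N" "{..<d}"
    by unfold_locales auto
  have "measure ?N {-r<..<r} \<le> r / \<sigma>"
    using emeasure_normal_interval_le[OF assms, of 0] assms by (simp add: measure_def enn2real_leI)
  then have "measure ?N {-r<..<r} ^ d \<le> (r / \<sigma>) ^ d"
    by (intro power_mono) auto
  then show ?thesis
    unfolding gauss_vec_def by (subst finite_measure_PiM_emb) auto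
qed

lemma abs_le_vnorm: "i < d \<Longrightarrow> \<bar>v i\<bar> \<le> vnorm d v"
  unfolding vnorm_def
  by (metis real_sqrt_abs real_sqrt_le_mono finite_lessThan lessThan_iff member_le_sum zero_le_power2)

lemma measure_gauss_vec_norm_less:
  assumes "\<sigma> > 0" "r \<ge> 0"
  shows "measure (gauss_vec d \<sigma>) {v \<in> space (gauss_vec d \<sigma>). vnorm d v < r} \<le> (r / \<sigma>) ^ d"
proof -
  interpret prob_space "gauss_vec d \<sigma>"
    using prob_space_gauss_vec[OF assms(1)] .
  have "{v \<in> space (gauss_vec d \<sigma>). vnorm d v < r} \<subseteq> PiE {..<d} (\<lambda>_. {-r<..<r})"
  proof
    fix v assume v: "v \<in> {v \<in> space (gauss_vec d \<sigma>). vnorm d v < r}"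
    then have "v \<in> PiE {..<d} (\<lambda>_. UNIV)"
      by (simp add: gauss_vec_def space_PiM)
    moreover have "\<bar>v i\<bar> < r" if "i < d" for i
      using abs_le_vnorm[OF that, of v] v by simp
    ultimately show "v \<in> PiE {..<d} (\<lambda>_. {-r<..<r})"
      by (force simp: PiE_iff abs_less_iff)
  qed
  then have "prob {v \<in> space (gauss_vec d \<sigma>). vnorm d v < r} \<le> prob (PiE {..<d} (\<lambda>_. {-r<..<r}))"
    by (intro finite_measure_mono sets_gauss_vec_cube)
  also have "\<dots> \<le> (r / \<sigma>) ^ d"
    by (rule measure_gauss_vec_cube_le[OF assms])
  finally show ?thesis .
qed

lemma borel_measurable_vnorm [measurable]: "vnorm d \<in> borel_measurable (gauss_vec d \<sigma>)"
  unfolding vnorm_def gauss_vec_def by measurable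

lemma measure_PiM_component:
  assumes "\<And>i. i \<in> I \<Longrightarrow> prob_space (M i)" "i \<in> I" "A \<in> sets (M i)"
  shows "measure (PiM I M) ((\<lambda>x. x i) -` A \<inter> space (PiM I M)) = measure (M i) A"
proof -
  have "measure (PiM I M) ((\<lambda>x. x i) -` A \<inter> space (PiM I M))
      = measure (distr (PiM I M) (M i) (\<lambda>x. x i)) A"
    using assms(2,3) by (simp add: measure_distr measurable_component_singleton)
  then show ?thesis
    using distr_PiM_component[of I M i] assms by simp
qed

lemma
  fixes m d :: nat and \<sigma> r :: real
  assumes "\<sigma> > 0" "r \<ge> 0"
  defines "E \<equiv> {V \<in> space (init_law m d \<sigma>). \<forall>k<m. r \<le> vnorm d (V k)}"
  shows sets_init_law_norms_ge: "E \<in> sets (init_law m d \<sigma>)"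
    and measure_init_law_norms_ge: "measure (init_law m d \<sigma>) E \<ge> 1 - m * (r / \<sigma>) ^ d"
proof -
  let ?L = "init_law m d \<sigma>" and ?G = "gauss_vec d \<sigma>"
  let ?small_norm = "{v \<in> space ?G. vnorm d v < r}"
  let ?small = "\<lambda>k. (\<lambda>V. V k) -` ?small_norm \<inter> space ?L"
  interpret prob_space ?L
    unfolding init_law_def by (intro prob_space_PiM prob_space_gauss_vec assms(1))
  have small_norm_sets: "?small_norm \<in> sets ?G"
    by measurable
  have small_sets: "?small k \<in> sets ?L" if "k < m" for k
    using that small_norm_sets unfolding init_law_def
    by (intro measurable_sets[OF measurable_component_singleton]) auto
  show E_sets: "E \<in> sets ?L"
    unfolding E_def init_law_def by measurable
  have small_prob: "prob (?small k) \<le> (r / \<sigma>) ^ d" if "k < m" for k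
  proof -
    have "prob (?small k) = measure ?G ?small_norm"
      unfolding init_law_def using that prob_space_gauss_vec[OF assms(1)] small_norm_sets
      by (intro measure_PiM_component) auto
    also have "\<dots> \<le> (r / \<sigma>) ^ d"
      by (rule measure_gauss_vec_norm_less[OF assms(1,2)])
    finally show ?thesis .
  qed
  have "space ?L - E = (\<Union>k<m. ?small k)"
    unfolding E_def init_law_def by (auto simp: not_le space_PiM PiE_iff)
  moreover have "prob (\<Union>k<m. ?small k) \<le> (\<Sum>k<m. prob (?small k))"
    using small_sets by (intro finite_measure_subadditive_finite) auto
  ultimately have "prob (space ?L - E) \<le> (\<Sum>k<m. prob (?small k))"
    by simp
  also have "\<dots> \<le> m * (r / \<sigma>) ^ d"
    using sum_mono[of "{..<m}" "\<lambda>k. prob (?small k)" "\<lambda>_. (r / \<sigma>) ^ d"] small_prob by simp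
  finally show "prob E \<ge> 1 - m * (r / \<sigma>) ^ d"
    using prob_compl[OF E_sets] by simp
qed

lemma Max_inverse_le:
  fixes x :: "'a \<Rightarrow> real"
  assumes "finite K" "K \<noteq> {}" "r > 0" "\<And>k. k \<in> K \<Longrightarrow> r \<le> x k"
  shows "(MAX k\<in>K. 1 / x k) \<le> 1 / r"
proof -
  have "1 / x k \<le> 1 / r" if "k \<in> K" for k
    using assms(3) assms(4)[OF that] by (simp add: divide_simps)
  then show ?thesis
    using assms(1,2) by simp
qed

lemma init_law_norms_ge_prob:
  fixes m d :: nat and \<sigma> \<delta> :: real
  assumes "m \<ge> 1" "d \<ge> 1" "\<sigma> > 0" "\<delta> > 0"
  obtains E where "E \<in> sets (init_law m d \<sigma>)" "measure (init_law m d \<sigma>) E \<ge> 1 - \<delta>"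
    "\<And>V k. V \<in> E \<Longrightarrow> k < m \<Longrightarrow> \<sigma> * (\<delta> / m) powr (1 / d) \<le> vnorm d (V k)"
proof -
  define r where "r = \<sigma> * (\<delta> / m) powr (1 / d)"
  define E where "E = {V \<in> space (init_law m d \<sigma>). \<forall>k<m. r \<le> vnorm d (V k)}"
  have r_nonneg: "r \<ge> 0"
    using assms by (simp add: r_def)
  have "(r / \<sigma>) ^ d = ((\<delta> / m) powr (1 / d)) powr d"
    using assms by (simp add: r_def powr_realpow)
  also have "\<dots> = \<delta> / m"
    using assms by (simp add: powr_powr)
  finally have "m * (r / \<sigma>) ^ d = \<delta>"
    using assms(1) by simp
  moreover have "1 - m * (r / \<sigma>) ^ d \<le> measure (init_law m d \<sigma>) E"
    unfolding E_def by (rule measure_init_law_norms_ge[OF assms(3) r_nonneg])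
  ultimately have E_prob: "measure (init_law m d \<sigma>) E \<ge> 1 - \<delta>"
    by linarith
  have E_sets: "E \<in> sets (init_law m d \<sigma>)"
    unfolding E_def by (rule sets_init_law_norms_ge[OF assms(3) r_nonneg])
  have "r \<le> vnorm d (V k)" if "V \<in> E" "k < m" for V k
    using that by (simp add: E_def)
  then show thesis
    using that[OF E_sets E_prob] unfolding r_def by blast
qed

theorem lemmaB10:
  fixes m d :: nat and \<alpha> \<delta> :: real
    and traj :: "(nat \<Rightarrow> nat \<Rightarrow> real) \<Rightarrow> real \<Rightarrow> nat \<Rightarrow> nat \<Rightarrow> real"
  assumes "m \<ge> 1" and "d \<ge> 1" and "\<alpha> > 0" and "0 < \<delta>" and "\<delta> < 1"
    and traj_init: "\<And>V k. traj V 0 k = V k"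
    and traj_norm: "\<And>V t k. t \<ge> 0 \<Longrightarrow> k < m \<Longrightarrow> vnorm d (traj V t k) \<ge> vnorm d (traj V 0 k)"
  shows "(\<exists>E \<in> sets (init_law m d \<alpha>).
            measure (init_law m d \<alpha>) E \<ge> 1 - \<delta> \<and>
            (\<forall>V \<in> E. (MAX k\<in>{..<m}. 1 / vnorm d (V k)) \<le> (real m / \<delta>) powr (1 / real d) / \<alpha>))
       \<and> (\<exists>E \<in> sets (init_law m d \<alpha>).
            measure (init_law m d \<alpha>) E \<ge> 1 - \<delta> \<and>
            (\<forall>V \<in> E. \<forall>t\<ge>0. (MAX k\<in>{..<m}. 1 / vnorm d (traj V t k)) \<le> (real m / \<delta>) powr (1 / real d) / \<alpha>))"
proof -
  define r where "r = \<alpha> * (\<delta> / m) powr (1 / d)"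
  have r_pos: "r > 0"
    using assms(1-4) by (simp add: r_def)
  have inverse_r: "1 / r = (m / \<delta>) powr (1 / d) / \<alpha>"
    using assms(1-4) by (simp add: r_def powr_divide)
  obtain E where E_sets: "E \<in> sets (init_law m d \<alpha>)"
    and E_prob: "measure (init_law m d \<alpha>) E \<ge> 1 - \<delta>"
    and E_norms: "\<And>V k. V \<in> E \<Longrightarrow> k < m \<Longrightarrow> r \<le> vnorm d (V k)"
    using init_law_norms_ge_prob[OF assms(1-4)] unfolding r_def by blast
  have bound: "(MAX k\<in>{..<m}. 1 / vnorm d (traj V t k)) \<le> (m / \<delta>) powr (1 / d) / \<alpha>"
    if "V \<in> E" "t \<ge> 0" for V t
    unfolding inverse_r[symmetric]
  proof (rule Max_inverse_le)
    fix k assume "k \<in> {..<m}"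
    then have "r \<le> vnorm d (V k)"
      using E_norms[OF \<open>V \<in> E\<close>] by simp
    also have "\<dots> \<le> vnorm d (traj V t k)"
      using traj_norm[OF \<open>t \<ge> 0\<close>, of k V] \<open>k \<in> {..<m}\<close> by (simp add: traj_init)
    finally show "r \<le> vnorm d (traj V t k)" .
  qed (use assms(1) r_pos in \<open>auto simp: lessThan_empty_iff\<close>)
  have "(MAX k\<in>{..<m}. 1 / vnorm d (V k)) \<le> (m / \<delta>) powr (1 / d) / \<alpha>" if "V \<in> E" for V
    using bound[OF that order.refl] by (simp add: traj_init)
  with bound E_sets E_prob show ?thesis
    by blast
qed

end
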